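(* Let $K$ be a field with a non-trivial non-Archimedean valuation $|\cdot|$, let $X$ be a complete non-Archimedean normed space over $K$, fix $k\in\mathbb N$ with $|2k^3|\neq0$, and for $f:G\to X$ let $$Df(x,y)=f(kx+y)+f(kx-y)-k[f(x+y)+f(x-y)]-2(k^3-k)f(x).$$ Let $\alpha:[0,\infty)\to[0,\infty)$ be a function satisfying (i) $\alpha(|k|t)\le\alpha(|k|)\alpha(t)$ for all $t\ge0$, and (ii) $\alpha(|k|)<|k|^3$. Let $\delta>0$, let $G$ be a normed space, and let $f:G\to X$ satisfy $$\|Df(x,y)\|\le\delta[\alpha(\|x\|)+\alpha(\|y\|)]\quad\text{for all }x,y\in G.$$ Then there exists a unique cubic mapping $C:G\to X$ (i.e. $DC(x,y)=0$ for all $x,y\in G$) such that $$\|f(x)-C(x)\|\le\frac{1}{|2k^3|}\delta\,\alpha(\|x\|)\quad\text{for all }x\in G.$$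
   Context: A non-Archimedean field is a field $K$ with $|\cdot|:K\to[0,\infty)$ such that $|r|=0$ iff $r=0$, $|rs|=|r||s|$, $|r+s|\le\max\{|r|,|s|\}$. A non-Archimedean norm on a $K$-vector space satisfies $\|x\|=0$ iff $x=0$, $\|rx\|=|r|\|x\|$, $\|x+y\|\le\max\{\|x\|,\|y\|\}$. Integers are regarded as elements of $K$ and $|k|$ is the valuation of $k$ in $K$. *)

theory Defs
  imports Complex_Main
begin

definition nonarch_valuation :: "('k::field \<Rightarrow> real) \<Rightarrow> bool" where
  "nonarch_valuation v \<longleftrightarrow>
     (\<forall>r. v r \<ge> 0) \<and> (\<forall>r. v r = 0 \<longleftrightarrow> r = 0) \<and>
     (\<forall>r s. v (r * s) = v r * v s) \<and> (\<forall>r s. v (r + s) \<le> max (v r) (v s))"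

definition nontrivial_valuation :: "('k::field \<Rightarrow> real) \<Rightarrow> bool" where
  "nontrivial_valuation v \<longleftrightarrow> (\<exists>r. v r \<noteq> 0 \<and> v r \<noteq> 1)"

definition nonarch_normed_space ::
  "('k::field \<Rightarrow> 'x::ab_group_add \<Rightarrow> 'x) \<Rightarrow> ('k \<Rightarrow> real) \<Rightarrow> ('x \<Rightarrow> real) \<Rightarrow> bool" where
  "nonarch_normed_space sc v n \<longleftrightarrow> vector_space sc \<and>
     (\<forall>x. n x = 0 \<longleftrightarrow> x = 0) \<and> (\<forall>r x. n (sc r x) = v r * n x) \<and>
     (\<forall>x y. n (x + y) \<le> max (n x) (n y))"

definition normed_space_over ::
  "('k::field \<Rightarrow> 'x::ab_group_add \<Rightarrow> 'x) \<Rightarrow> ('k \<Rightarrow> real) \<Rightarrow> ('x \<Rightarrow> real) \<Rightarrow> bool" where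
  "normed_space_over sc v n \<longleftrightarrow> vector_space sc \<and>
     (\<forall>x. n x = 0 \<longleftrightarrow> x = 0) \<and> (\<forall>r x. n (sc r x) = v r * n x) \<and>
     (\<forall>x y. n (x + y) \<le> n x + n y)"

definition norm_complete :: "('x::ab_group_add \<Rightarrow> real) \<Rightarrow> bool" where
  "norm_complete n \<longleftrightarrow> (\<forall>s :: nat \<Rightarrow> 'x.
     (\<forall>e>0. \<exists>N. \<forall>i\<ge>N. \<forall>j\<ge>N. n (s i - s j) < e) \<longrightarrow>
     (\<exists>L. \<forall>e>0. \<exists>N. \<forall>i\<ge>N. n (s i - L) < e))"

definition Dcubic ::
  "('k::field \<Rightarrow> 'g::ab_group_add \<Rightarrow> 'g) \<Rightarrow> ('k \<Rightarrow> 'x::ab_group_add \<Rightarrow> 'x) \<Rightarrow> nat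
    \<Rightarrow> ('g \<Rightarrow> 'x) \<Rightarrow> 'g \<Rightarrow> 'g \<Rightarrow> 'x" where
  "Dcubic scG scX k f x y =
     f (scG (of_nat k) x + y) + f (scG (of_nat k) x - y)
     - scX (of_nat k) (f (x + y) + f (x - y))
     - scX (2 * ((of_nat k) ^ 3 - of_nat k)) (f x)"

end

theory Submission
  imports Defs
begin

text \<open>Putting \<open>y = 0\<close> gives \<open>Df(x,0) = 2 f(kx) - 2k^3 f(x)\<close>, so \<open>f\<close> is within
  \<open>\<delta> \<alpha>(\<parallel>x\<parallel>) / |2k^3|\<close> of \<open>x \<mapsto> f(kx) / k^3\<close>. Hence consecutive terms of the Hyers
  sequence \<open>f(k^n x) / k^(3n)\<close> differ by at most \<open>q^n\<close> times that bound, where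
  \<open>q = \<alpha>(|k|) / |k|^3 < 1\<close>. In an ultrametric norm the distance between two terms is bounded
  by the largest single step, so the sequence converges to some \<open>C(x)\<close> within the first-step
  bound of \<open>f(x)\<close>; and \<open>DC = 0\<close> because the defect of the \<open>n\<close>-th term is \<open>O(q^n)\<close>.
  Every cubic map satisfies \<open>C(x) = C(k^n x) / k^(3n)\<close>, so every cubic map close to \<open>f\<close> is
  the limit of the same Hyers sequence, which gives uniqueness.\<close>

locale nonarch_valued =
  fixes v :: "'k::field \<Rightarrow> real"
  assumes nonarch_valuation: "nonarch_valuation v"
begin

lemma v_nonneg: "v r \<ge> 0"
  and v_eq_0_iff: "v r = 0 \<longleftrightarrow> r = 0"
  and v_mult: "v (r * s) = v r * v s"
  and v_add_le_max: "v (r + s) \<le> max (v r) (v s)"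
  using nonarch_valuation by (simp_all add: nonarch_valuation_def)

lemma v_zero: "v 0 = 0"
  using v_eq_0_iff by simp

lemma v_one: "v 1 = 1"
  using v_mult[of 1 1] v_eq_0_iff[of 1] by simp

lemma v_minus_one: "v (-1) = 1"
proof -
  have "v (-1) ^ 2 = 1"
    using v_mult[of "-1" "-1"] v_one by (simp add: power2_eq_square)
  then show ?thesis
    using v_nonneg[of "-1"] by (auto simp: power2_eq_1_iff)
qed

lemma v_power: "v (r ^ n) = v r ^ n"
  by (induction n) (simp_all add: v_one v_mult)

lemma v_inverse: "v (inverse r) = inverse (v r)"
proof (cases "r = 0")
  case False
  then have "v r * v (inverse r) = 1"
    using v_mult[of r "inverse r"] v_one by simp
  then show ?thesis
    by (simp add: inverse_unique)
qed (simp add: v_zero)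

lemma v_of_nat_le_one: "v (of_nat n) \<le> 1"
proof (induction n)
  case (Suc n)
  have "v (of_nat n + 1) \<le> max (v (of_nat n)) (v 1)"
    by (rule v_add_le_max)
  then show ?case
    using Suc v_one by (simp add: add.commute)
qed (simp add: v_zero)

lemma normed_space_over_nonneg:
  assumes "normed_space_over sc v n"
  shows "n x \<ge> 0"
proof -
  interpret vector_space sc
    using assms by (simp add: normed_space_over_def)
  have "n (- x) = n (sc (-1) x)"
    by simp
  also have "\<dots> = v (-1) * n x"
    using assms by (simp only: normed_space_over_def)
  finally have "n (- x) = n x"
    by (simp add: v_minus_one)
  moreover have "0 \<le> n x + n (- x)"
    using assms by (metis normed_space_over_def add.right_inverse)
  ultimately show ?thesis
    by simp
qed

end

locale nonarch_normed = nonarch_valued v for v :: "'k::field \<Rightarrow> real" +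
  fixes sc :: "'k \<Rightarrow> 'x::ab_group_add \<Rightarrow> 'x" and nrm :: "'x \<Rightarrow> real"
  assumes nonarch_normed: "nonarch_normed_space sc v nrm"
begin

sublocale vector_space sc
  using nonarch_normed by (simp add: nonarch_normed_space_def)

lemma nrm_eq_0_iff: "nrm x = 0 \<longleftrightarrow> x = 0"
  and nrm_scale: "nrm (sc r x) = v r * nrm x"
  and nrm_add_le_max: "nrm (x + y) \<le> max (nrm x) (nrm y)"
  using nonarch_normed by (simp_all add: nonarch_normed_space_def)

lemma nrm_zero: "nrm 0 = 0"
  using nrm_eq_0_iff by simp

lemma nrm_minus: "nrm (- x) = nrm x"
  using nrm_scale[of "-1" x] v_minus_one by simp

lemma nrm_nonneg: "nrm x \<ge> 0"
proof -
  have "0 = nrm (x + - x)"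
    by (simp add: nrm_zero)
  also have "\<dots> \<le> max (nrm x) (nrm (- x))"
    by (rule nrm_add_le_max)
  finally show ?thesis
    by (simp add: nrm_minus)
qed

lemma nrm_triangle: "nrm (x + y) \<le> nrm x + nrm y"
  using nrm_add_le_max[of x y] nrm_nonneg[of x] nrm_nonneg[of y] by linarith

lemma nrm_diff_le: "nrm (x - y) \<le> nrm x + nrm y"
  using nrm_triangle[of x "- y"] by (simp add: nrm_minus)

lemma nrm_diff_commute: "nrm (x - y) = nrm (y - x)"
  using nrm_minus[of "x - y"] by simp

lemma nrm_diff_le_max: "nrm (x - y) \<le> max (nrm (x - z)) (nrm (z - y))"
  using nrm_add_le_max[of "x - z" "z - y"] by simp

lemma nrm_scale_of_nat_le: "nrm (sc (of_nat n) x) \<le> nrm x"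
  using v_of_nat_le_one[of n] nrm_nonneg[of x] v_nonneg[of "of_nat n"]
  by (simp add: nrm_scale mult_left_le_one_le)

lemma zero_if_nrm_le_vanishing:
  assumes "\<And>n. nrm z \<le> b n" and "b \<longlonglongrightarrow> 0"
  shows "z = 0"
proof -
  have "nrm z \<le> 0"
    using assms by (intro LIMSEQ_le_const[of b]) auto
  then show ?thesis
    using nrm_nonneg[of z] nrm_eq_0_iff by simp
qed

lemma nrm_limit_unique:
  assumes "(\<lambda>n. nrm (s n - L)) \<longlonglongrightarrow> 0" and "(\<lambda>n. nrm (s n - L')) \<longlonglongrightarrow> 0"
  shows "L = L'"
proof -
  have "nrm (L - L') \<le> nrm (s n - L) + nrm (s n - L')" for n
    using nrm_triangle[of "L - s n" "s n - L'"] nrm_diff_commute[of L "s n"] by simp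
  then have "L - L' = 0"
    using tendsto_add_zero[OF assms] by (rule zero_if_nrm_le_vanishing)
  then show ?thesis
    by simp
qed

lemma nrm_diff_le_by_steps:
  assumes steps: "\<And>n. nrm (s (Suc n) - s n) \<le> b n" and "decseq b" and "n \<le> m"
  shows "nrm (s m - s n) \<le> b n"
  using \<open>n \<le> m\<close>
proof (induction m rule: dec_induct)
  case base
  show ?case
    using steps[of n] nrm_nonneg[of "s (Suc n) - s n"] by (simp add: nrm_zero)
next
  case (step m)
  have "b m \<le> b n"
    using \<open>decseq b\<close> step.hyps(1) by (simp add: decseq_def)
  then have "nrm (s (Suc m) - s m) \<le> b n"
    using steps[of m] by linarith
  then show ?case
    using step.IH nrm_diff_le_max[of "s (Suc m)" "s n" "s m"] by simp
qed

definition nrm_lim :: "(nat \<Rightarrow> 'x) \<Rightarrow> 'x" where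
  "nrm_lim s = (SOME L. (\<lambda>n. nrm (s n - L)) \<longlonglongrightarrow> 0)"

lemma geometric_steps_converge:
  assumes complete: "norm_complete nrm"
    and steps: "\<And>n. nrm (s (Suc n) - s n) \<le> B * q ^ n" and "0 \<le> q" and "q < 1"
  shows "(\<lambda>n. nrm (s n - nrm_lim s)) \<longlonglongrightarrow> 0" and "nrm (s n - nrm_lim s) \<le> B * q ^ n"
proof -
  have "B \<ge> 0"
    using steps[of 0] nrm_nonneg[of "s 1 - s 0"] by simp
  then have "decseq (\<lambda>n. B * q ^ n)"
    using \<open>0 \<le> q\<close> \<open>q < 1\<close> by (auto simp: decseq_def intro!: mult_left_mono power_decreasing)
  then have far: "nrm (s m - s n) \<le> B * q ^ n" if "n \<le> m" for m n
    using nrm_diff_le_by_steps[of s "\<lambda>n. B * q ^ n"] steps that by blast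
  have null: "(\<lambda>n. B * q ^ n) \<longlonglongrightarrow> 0"
    using \<open>0 \<le> q\<close> \<open>q < 1\<close> by (intro tendsto_mult_right_zero LIMSEQ_power_zero) simp
  have "\<exists>N. \<forall>i\<ge>N. \<forall>j\<ge>N. nrm (s i - s j) < e" if "e > 0" for e
  proof -
    obtain N where "\<forall>n\<ge>N. norm (B * q ^ n - 0) < e"
      using LIMSEQ_D[OF null \<open>e > 0\<close>] by blast
    then have "B * q ^ N < e"
      by (simp add: abs_less_iff)
    moreover have "nrm (s i - s j) \<le> B * q ^ N" if "i \<ge> N" "j \<ge> N" for i j
      using nrm_diff_le_max[of "s i" "s j" "s N"] far[OF \<open>i \<ge> N\<close>] far[OF \<open>j \<ge> N\<close>]
        nrm_diff_commute[of "s N" "s j"] by simp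
    ultimately show ?thesis
      by force
  qed
  then obtain L where "\<forall>e>0. \<exists>N. \<forall>i\<ge>N. nrm (s i - L) < e"
    using complete unfolding norm_complete_def by blast
  then have "(\<lambda>n. nrm (s n - L)) \<longlonglongrightarrow> 0"
    by (intro LIMSEQ_I) (simp add: nrm_nonneg)
  then show lim: "(\<lambda>n. nrm (s n - nrm_lim s)) \<longlonglongrightarrow> 0"
    unfolding nrm_lim_def by (rule someI)
  have "nrm (s n - nrm_lim s) - B * q ^ n \<le> nrm (s m - nrm_lim s)" if "n \<le> m" for m
    using nrm_triangle[of "s n - s m" "s m - nrm_lim s"] far[OF that]
      nrm_diff_commute[of "s n" "s m"] by simp
  then have "nrm (s n - nrm_lim s) - B * q ^ n \<le> 0"
    using lim by (intro LIMSEQ_le_const) auto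
  then show "nrm (s n - nrm_lim s) \<le> B * q ^ n"
    by simp
qed

lemma nrm_Dcubic_le:
  "nrm (Dcubic scG sc k h x y) \<le>
     nrm (h (scG (of_nat k) x + y)) + nrm (h (scG (of_nat k) x - y))
     + nrm (h (x + y)) + nrm (h (x - y)) + nrm (h x)"
proof -
  \<comment> \<open>Both coefficients are integers, whose absolute value is at most 1.\<close>
  have "2 * (of_nat k ^ 3 - of_nat k) = (of_nat (2 * (k ^ 3 - k)) :: 'k)"
    by (simp add: of_nat_diff power3_eq_cube)
  then have "Dcubic scG sc k h x y = (h (scG (of_nat k) x + y) + h (scG (of_nat k) x - y))
      - sc (of_nat k) (h (x + y) + h (x - y)) - sc (of_nat (2 * (k ^ 3 - k))) (h x)"
    unfolding Dcubic_def by simp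
  also have "nrm \<dots> \<le> nrm (h (scG (of_nat k) x + y) + h (scG (of_nat k) x - y))
      + nrm (h (x + y) + h (x - y)) + nrm (h x)"
    using nrm_diff_le nrm_scale_of_nat_le by (smt (verit))
  finally show ?thesis
    using nrm_triangle[of "h (scG (of_nat k) x + y)" "h (scG (of_nat k) x - y)"]
      nrm_triangle[of "h (x + y)" "h (x - y)"] by linarith
qed

end

lemma Dcubic_diff:
  assumes "vector_space scX"
  shows "Dcubic scG scX k (\<lambda>z. f z - h z) x y = Dcubic scG scX k f x y - Dcubic scG scX k h x y"
proof -
  interpret vector_space scX by fact
  show ?thesis
    unfolding Dcubic_def by (simp add: scale_right_diff_distrib algebra_simps)
qed

lemma Dcubic_rescale:
  assumes "vector_space scX" and "vector_space scG"
  shows "Dcubic scG scX k (\<lambda>z. scX r (f (scG s z))) x y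
    = scX r (Dcubic scG scX k f (scG s x) (scG s y))"
proof -
  interpret X: vector_space scX by fact
  interpret G: vector_space scG by fact
  show ?thesis
    unfolding Dcubic_def
    by (simp add: G.scale_right_distrib G.scale_right_diff_distrib X.scale_right_distrib
        X.scale_right_diff_distrib mult.commute)
qed

lemma Dcubic_zero_right:
  assumes "vector_space scX"
  shows "Dcubic scG scX k h x 0 = scX 2 (h (scG (of_nat k) x)) - scX (2 * of_nat k ^ 3) (h x)"
proof -
  interpret vector_space scX by fact
  have double: "z + z = scX 2 z" for z
    by (metis scale_left_distrib scale_one one_add_one)
  have "scX (of_nat k) (h x + h x) + scX (2 * (of_nat k ^ 3 - of_nat k)) (h x)
      = scX (2 * of_nat k ^ 3) (h x)"
    unfolding double scale_scale scale_left_distrib[symmetric] by (simp add: algebra_simps)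
  then show ?thesis
    unfolding Dcubic_def by (simp add: double algebra_simps)
qed

lemma cubic_homogeneous:
  fixes scX :: "'k::field \<Rightarrow> 'x::ab_group_add \<Rightarrow> 'x"
  assumes "vector_space scX" and "(2::'k) \<noteq> 0" and "Dcubic scG scX k h x 0 = 0"
  shows "h (scG (of_nat k) x) = scX (of_nat k ^ 3) (h x)"
proof -
  interpret vector_space scX by fact
  have "scX 2 (h (scG (of_nat k) x)) = scX 2 (scX (of_nat k ^ 3) (h x))"
    using assms(3) Dcubic_zero_right[OF assms(1), of scG k h x] by simp
  with \<open>2 \<noteq> 0\<close> show ?thesis
    by (rule scale_left_imp_eq)
qed

lemma submultiplicative_power:
  fixes \<alpha> :: "real \<Rightarrow> real"
  assumes submult: "\<forall>t\<ge>0. \<alpha> (a * t) \<le> \<alpha> a * \<alpha> t" and nonneg: "\<forall>t\<ge>0. \<alpha> t \<ge> 0"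
    and "a \<ge> 0" and "t \<ge> 0"
  shows "\<alpha> (a ^ n * t) \<le> \<alpha> a ^ n * \<alpha> t"
proof (induction n)
  case (Suc n)
  have "\<alpha> (a ^ Suc n * t) \<le> \<alpha> a * \<alpha> (a ^ n * t)"
    using submult \<open>a \<ge> 0\<close> \<open>t \<ge> 0\<close> by (simp add: mult.assoc)
  also have "\<dots> \<le> \<alpha> a * (\<alpha> a ^ n * \<alpha> t)"
    using Suc nonneg \<open>a \<ge> 0\<close> by (simp add: mult_left_mono)
  finally show ?case
    by (simp add: mult.assoc)
qed simp

lemma submultiplicative_zero:
  fixes \<alpha> :: "real \<Rightarrow> real"
  assumes submult: "\<forall>t\<ge>0. \<alpha> (a * t) \<le> \<alpha> a * \<alpha> t" and nonneg: "\<forall>t\<ge>0. \<alpha> t \<ge> 0"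
    and "\<alpha> a < 1"
  shows "\<alpha> 0 = 0"
proof (rule ccontr)
  assume "\<alpha> 0 \<noteq> 0"
  then have "\<alpha> 0 > 0"
    using nonneg by (simp add: order_less_le)
  then have "\<alpha> a * \<alpha> 0 < \<alpha> 0"
    using \<open>\<alpha> a < 1\<close> by simp
  moreover have "\<alpha> 0 \<le> \<alpha> a * \<alpha> 0"
    using submult by (metis mult_zero_right order_refl)
  ultimately show False
    by simp
qed

locale cubic_stability = X: nonarch_normed v scX nX
  for v :: "'k::field \<Rightarrow> real" and scX :: "'k \<Rightarrow> 'x::ab_group_add \<Rightarrow> 'x" and nX +
  fixes scG :: "'k \<Rightarrow> 'g::ab_group_add \<Rightarrow> 'g" and nG :: "'g \<Rightarrow> real"
    and k :: nat and \<alpha> :: "real \<Rightarrow> real" and \<delta> :: real and f :: "'g \<Rightarrow> 'x"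
  assumes complete: "norm_complete nX"
    and normed_G: "normed_space_over scG v nG"
    and v_2k3: "v (2 * of_nat k ^ 3) \<noteq> 0"
    and \<alpha>_nonneg: "\<forall>t\<ge>0. \<alpha> t \<ge> 0"
    and \<alpha>_submult: "\<forall>t\<ge>0. \<alpha> (v (of_nat k) * t) \<le> \<alpha> (v (of_nat k)) * \<alpha> t"
    and \<alpha>_small: "\<alpha> (v (of_nat k)) < v (of_nat k) ^ 3"
    and \<delta>_pos: "\<delta> > 0"
    and Df_bound: "\<forall>x y. nX (Dcubic scG scX k f x y) \<le> \<delta> * (\<alpha> (nG x) + \<alpha> (nG y))"
begin

sublocale G: vector_space scG
  using normed_G by (simp add: normed_space_over_def)

abbreviation c :: 'k where
  "c \<equiv> of_nat k"

definition q :: real where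
  "q = \<alpha> (v c) / v c ^ 3"

definition B :: real where
  "B = \<delta> / v (2 * c ^ 3)"

definition hyers_seq :: "nat \<Rightarrow> 'g \<Rightarrow> 'x" where
  "hyers_seq n x = scX (inverse (c ^ 3) ^ n) (f (scG (c ^ n) x))"

definition hyers_limit :: "'g \<Rightarrow> 'x" where
  "hyers_limit x = X.nrm_lim (\<lambda>n. hyers_seq n x)"

lemma c_nonzero: "c \<noteq> 0" and two_nonzero: "(2::'k) \<noteq> 0"
  using v_2k3 X.v_zero by auto

lemma v_c_pos: "v c > 0"
  using c_nonzero X.v_eq_0_iff[of c] X.v_nonneg[of c] by linarith

lemma q_nonneg: "q \<ge> 0" and q_less_one: "q < 1"
  using \<alpha>_nonneg X.v_nonneg[of c] \<alpha>_small v_c_pos by (simp_all add: q_def)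

lemma B_nonneg: "B \<ge> 0"
  using \<delta>_pos X.v_nonneg by (simp add: B_def)

lemma \<alpha>_zero: "\<alpha> 0 = 0"
proof -
  have "v c ^ 3 \<le> 1"
    using X.v_of_nat_le_one X.v_nonneg by (simp add: power_le_one)
  then show ?thesis
    using \<alpha>_small by (intro submultiplicative_zero[OF \<alpha>_submult \<alpha>_nonneg]) simp
qed

lemma nG_nonneg: "nG x \<ge> 0"
  using X.normed_space_over_nonneg[OF normed_G] .

lemma nG_scale: "nG (scG r x) = v r * nG x"
  using normed_G by (simp add: normed_space_over_def)

lemma nG_zero: "nG 0 = 0"
  using nG_scale[of 0 0] X.v_zero by simp

lemma scaled_\<alpha>_le: "v (inverse (c ^ 3)) ^ n * \<alpha> (nG (scG (c ^ n) x)) \<le> q ^ n * \<alpha> (nG x)"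
proof -
  have "\<alpha> (nG (scG (c ^ n) x)) \<le> \<alpha> (v c) ^ n * \<alpha> (nG x)"
    using submultiplicative_power[OF \<alpha>_submult \<alpha>_nonneg X.v_nonneg nG_nonneg]
    by (simp add: nG_scale X.v_power)
  then have "v (inverse (c ^ 3)) ^ n * \<alpha> (nG (scG (c ^ n) x))
      \<le> inverse (v c ^ 3) ^ n * (\<alpha> (v c) ^ n * \<alpha> (nG x))"
    by (simp add: X.v_inverse X.v_power mult_left_mono v_c_pos)
  also have "\<dots> = q ^ n * \<alpha> (nG x)"
    by (simp add: q_def divide_inverse power_mult_distrib)
  finally show ?thesis .
qed

lemma first_step_bound: "nX (scX (inverse (c ^ 3)) (f (scG c x)) - f x) \<le> B * \<alpha> (nG x)"
proof -
  have "scX (inverse (c ^ 3)) (f (scG c x)) - f x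
      = scX (inverse (2 * c ^ 3)) (Dcubic scG scX k f x 0)"
    using two_nonzero c_nonzero
    by (simp add: Dcubic_zero_right[OF X.vector_space_axioms] X.scale_right_diff_distrib)
  then have "nX (scX (inverse (c ^ 3)) (f (scG c x)) - f x)
      = inverse (v (2 * c ^ 3)) * nX (Dcubic scG scX k f x 0)"
    by (simp only: X.nrm_scale X.v_inverse)
  also have "\<dots> \<le> inverse (v (2 * c ^ 3)) * (\<delta> * \<alpha> (nG x))"
    using Df_bound[rule_format, of x 0] X.v_nonneg
    by (intro mult_left_mono) (simp_all add: nG_zero \<alpha>_zero)
  finally show ?thesis
    by (simp add: B_def divide_inverse mult_ac)
qed

lemma hyers_seq_step: "nX (hyers_seq (Suc n) x - hyers_seq n x) \<le> B * \<alpha> (nG x) * q ^ n"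
proof -
  define y where "y = scG (c ^ n) x"
  have "hyers_seq (Suc n) x - hyers_seq n x
      = scX (inverse (c ^ 3) ^ n) (scX (inverse (c ^ 3)) (f (scG c y)) - f y)"
    by (simp add: hyers_seq_def y_def X.scale_right_diff_distrib mult.commute)
  then have "nX (hyers_seq (Suc n) x - hyers_seq n x)
      \<le> v (inverse (c ^ 3)) ^ n * (B * \<alpha> (nG y))"
    using first_step_bound[of y] X.v_nonneg by (simp add: X.nrm_scale X.v_power mult_left_mono)
  also have "\<dots> = B * (v (inverse (c ^ 3)) ^ n * \<alpha> (nG y))"
    by (simp add: mult_ac)
  also have "\<dots> \<le> B * (q ^ n * \<alpha> (nG x))"
    using scaled_\<alpha>_le[of n x] B_nonneg unfolding y_def by (rule mult_left_mono)
  finally show ?thesis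
    by (simp add: mult_ac)
qed

lemma hyers_seq_tendsto: "(\<lambda>n. nX (hyers_seq n x - hyers_limit x)) \<longlonglongrightarrow> 0"
  and hyers_limit_approx: "nX (f x - hyers_limit x) \<le> B * \<alpha> (nG x)"
proof -
  have steps: "nX (hyers_seq (Suc n) x - hyers_seq n x) \<le> B * \<alpha> (nG x) * q ^ n" for n
    by (rule hyers_seq_step)
  note limit = X.geometric_steps_converge[OF complete steps q_nonneg q_less_one]
  show "(\<lambda>n. nX (hyers_seq n x - hyers_limit x)) \<longlonglongrightarrow> 0"
    using limit(1) by (simp add: hyers_limit_def)
  show "nX (f x - hyers_limit x) \<le> B * \<alpha> (nG x)"
    using limit(2)[of 0] by (simp add: hyers_limit_def hyers_seq_def)
qed

lemma Dcubic_hyers_seq_bound: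
  "nX (Dcubic scG scX k (hyers_seq n) x y) \<le> \<delta> * q ^ n * (\<alpha> (nG x) + \<alpha> (nG y))"
proof -
  have "hyers_seq n = (\<lambda>z. scX (inverse (c ^ 3) ^ n) (f (scG (c ^ n) z)))"
    by (simp add: fun_eq_iff hyers_seq_def)
  then have "nX (Dcubic scG scX k (hyers_seq n) x y)
      = v (inverse (c ^ 3)) ^ n * nX (Dcubic scG scX k f (scG (c ^ n) x) (scG (c ^ n) y))"
    by (simp add: Dcubic_rescale[OF X.vector_space_axioms G.vector_space_axioms] X.nrm_scale X.v_power)
  also have "\<dots> \<le> v (inverse (c ^ 3)) ^ n
      * (\<delta> * (\<alpha> (nG (scG (c ^ n) x)) + \<alpha> (nG (scG (c ^ n) y))))"
    using Df_bound X.v_nonneg by (simp add: mult_left_mono)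
  also have "\<dots> \<le> \<delta> * (q ^ n * \<alpha> (nG x) + q ^ n * \<alpha> (nG y))"
    using scaled_\<alpha>_le[of n x] scaled_\<alpha>_le[of n y] \<delta>_pos
    by (simp add: distrib_left mult.left_commute mult_left_mono add_mono)
  finally show ?thesis
    by (simp add: algebra_simps)
qed

lemma hyers_limit_cubic: "Dcubic scG scX k hyers_limit x y = 0"
proof -
  define d where "d n z = nX (hyers_limit z - hyers_seq n z)" for n z
  define b where "b n = d n (scG c x + y) + d n (scG c x - y) + d n (x + y) + d n (x - y) + d n x
    + \<delta> * q ^ n * (\<alpha> (nG x) + \<alpha> (nG y))" for n
  have "nX (Dcubic scG scX k hyers_limit x y) \<le> b n" for n
  proof -
    have "Dcubic scG scX k hyers_limit x y
        = Dcubic scG scX k (\<lambda>z. hyers_limit z - hyers_seq n z) x y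
          + Dcubic scG scX k (hyers_seq n) x y"
      using Dcubic_diff[OF X.vector_space_axioms, of scG k hyers_limit "hyers_seq n" x y] by simp
    then show ?thesis
      using X.nrm_triangle X.nrm_Dcubic_le[of scG k "\<lambda>z. hyers_limit z - hyers_seq n z" x y]
        Dcubic_hyers_seq_bound[of n x y] unfolding b_def d_def by (smt (verit))
  qed
  moreover have "b \<longlonglongrightarrow> 0"
  proof -
    have "(\<lambda>n. d n z) \<longlonglongrightarrow> 0" for z
      using hyers_seq_tendsto[of z] X.nrm_diff_commute by (simp add: d_def)
    moreover have "(\<lambda>n. \<delta> * q ^ n * (\<alpha> (nG x) + \<alpha> (nG y))) \<longlonglongrightarrow> 0"
      using q_nonneg q_less_one
      by (intro tendsto_mult_left_zero tendsto_mult_right_zero LIMSEQ_power_zero) simp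
    ultimately show ?thesis
      unfolding b_def by (intro tendsto_add_zero)
  qed
  ultimately show ?thesis
    by (rule X.zero_if_nrm_le_vanishing)
qed

lemma cubic_iterate:
  assumes "\<forall>x. Dcubic scG scX k h x 0 = 0"
  shows "h x = scX (inverse (c ^ 3) ^ n) (h (scG (c ^ n) x))"
proof (induction n)
  case (Suc n)
  have "h (scG (c ^ Suc n) x) = scX (c ^ 3) (h (scG (c ^ n) x))"
    using cubic_homogeneous[OF X.vector_space_axioms two_nonzero, of scG k h "scG (c ^ n) x"] assms
    by simp
  then show ?case
    using Suc c_nonzero by (simp add: mult.assoc)
qed simp

lemma cubic_approximant_is_limit:
  assumes cubic: "\<forall>x y. Dcubic scG scX k C' x y = 0"
    and approx: "\<forall>x. nX (f x - C' x) \<le> B * \<alpha> (nG x)"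
  shows "(\<lambda>n. nX (hyers_seq n x - C' x)) \<longlonglongrightarrow> 0"
proof (rule tendsto_sandwich[of "\<lambda>_. 0" _ _ "\<lambda>n. B * \<alpha> (nG x) * q ^ n"])
  define y where "y n = scG (c ^ n) x" for n
  have "hyers_seq n x - C' x = scX (inverse (c ^ 3) ^ n) (f (y n) - C' (y n))" for n
    using cubic_iterate[of C' x n] cubic
    by (simp add: hyers_seq_def y_def X.scale_right_diff_distrib)
  then have "nX (hyers_seq n x - C' x) \<le> v (inverse (c ^ 3)) ^ n * (B * \<alpha> (nG (y n)))" for n
    using approx X.v_nonneg by (simp add: X.nrm_scale X.v_power mult_left_mono)
  also have "v (inverse (c ^ 3)) ^ n * (B * \<alpha> (nG (y n))) \<le> B * \<alpha> (nG x) * q ^ n" for n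
    using mult_left_mono[OF scaled_\<alpha>_le[of n x] B_nonneg] unfolding y_def by (simp add: mult_ac)
  finally show "eventually (\<lambda>n. nX (hyers_seq n x - C' x) \<le> B * \<alpha> (nG x) * q ^ n) sequentially"
    by simp
  show "(\<lambda>n. B * \<alpha> (nG x) * q ^ n) \<longlonglongrightarrow> 0"
    using q_nonneg q_less_one by (intro tendsto_mult_right_zero LIMSEQ_power_zero) simp
qed (simp_all add: X.nrm_nonneg)

theorem unique_cubic_approximation:
  "\<exists>!C. (\<forall>x y. Dcubic scG scX k C x y = 0) \<and> (\<forall>x. nX (f x - C x) \<le> B * \<alpha> (nG x))"
proof (rule ex1I)
  show "(\<forall>x y. Dcubic scG scX k hyers_limit x y = 0)
      \<and> (\<forall>x. nX (f x - hyers_limit x) \<le> B * \<alpha> (nG x))"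
    using hyers_limit_cubic hyers_limit_approx by blast
next
  fix C' assume "(\<forall>x y. Dcubic scG scX k C' x y = 0) \<and> (\<forall>x. nX (f x - C' x) \<le> B * \<alpha> (nG x))"
  then have "(\<lambda>n. nX (hyers_seq n x - C' x)) \<longlonglongrightarrow> 0" for x
    using cubic_approximant_is_limit by blast
  then show "C' = hyers_limit"
    using X.nrm_limit_unique[OF _ hyers_seq_tendsto] by blast
qed

end

theorem corollary2p2:
  fixes v :: "'k::field \<Rightarrow> real"
    and scX :: "'k \<Rightarrow> 'x::ab_group_add \<Rightarrow> 'x" and nX :: "'x \<Rightarrow> real"
    and scG :: "'k \<Rightarrow> 'g::ab_group_add \<Rightarrow> 'g" and nG :: "'g \<Rightarrow> real"
    and k :: nat and \<alpha> :: "real \<Rightarrow> real" and \<delta> :: real and f :: "'g \<Rightarrow> 'x"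
  assumes "nonarch_valuation v" and "nontrivial_valuation v"
    and "nonarch_normed_space scX v nX" and "norm_complete nX"
    and "normed_space_over scG v nG"
    and "v (2 * of_nat k ^ 3) \<noteq> 0"
    and "\<forall>t\<ge>0. \<alpha> t \<ge> 0"
    and "\<forall>t\<ge>0. \<alpha> (v (of_nat k) * t) \<le> \<alpha> (v (of_nat k)) * \<alpha> t"
    and "\<alpha> (v (of_nat k)) < v (of_nat k) ^ 3"
    and "\<delta> > 0"
    and "\<forall>x y. nX (Dcubic scG scX k f x y) \<le> \<delta> * (\<alpha> (nG x) + \<alpha> (nG y))"
  shows "\<exists>!C :: 'g \<Rightarrow> 'x. (\<forall>x y. Dcubic scG scX k C x y = 0) \<and>
           (\<forall>x. nX (f x - C x) \<le> (1 / v (2 * of_nat k ^ 3)) * \<delta> * \<alpha> (nG x))"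
proof -
  interpret cubic_stability v scX nX scG nG k \<alpha> \<delta> f
    using assms by unfold_locales (simp_all add: nonarch_valued_def)
  show ?thesis
    using unique_cubic_approximation by (simp add: B_def)
qed

end
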